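(* Every shallow star and every periodic path is unary FA-presentable.
   Context: A template is $(T,\eta,t_0,t_1)$ with $(T,\eta)$ a finite directed tree (a tree with each edge given a direction), $t_0,t_1\in T$, and $t_0$ a leaf. The graph $\mathcal{S}(T,\eta,t_0,t_1)$ is obtained from countably many disjoint copies $(T^{(j)},\eta^{(j)},t_0^{(j)},t_1^{(j)})$, $j\in\{0,1,2,\dots\}$, by identifying the vertices related by the equivalence relation generated by $\{(t_1^{(j)},t_0^{(j+1)}):j\ge 0\}$. If $t_0=t_1$ it is called a shallow star; if $t_0\ne t_1$ a periodic path. A directed graph $(X,\eta)$ is unary FA-presentable if there exist a regular language $L\subseteq a^*$ and a surjection $\phi:L\to X$ such that $\{(u,v)\in L^2:u\phi=v\phi\}$ and $\{(u,v)\in L^2:(u\phi,v\phi)\in\eta\}$ are regular relations (the words $\mathrm{conv}(u,v)$ over $\{a,\$\}^2$, reading $u,v$ in parallel with the shorter padded by $\$$, form regular languages). *)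

theory Defs
  imports Main
begin

definition regular :: "'s list set \<Rightarrow> bool" where
  "regular L \<longleftrightarrow>
     (\<exists>(Q::nat set) q0 (\<delta>::nat \<Rightarrow> 's \<Rightarrow> nat) F.
        finite Q \<and> q0 \<in> Q \<and> (\<forall>q\<in>Q. \<forall>x. \<delta> q x \<in> Q) \<and> F \<subseteq> Q \<and>
        L = {w. foldl \<delta> q0 w \<in> F})"

text \<open>Convolution of two words: read in parallel, shorter padded by the
  padding symbol None (= the symbol \$).\<close>
definition conv :: "'b list \<Rightarrow> 'b list \<Rightarrow> ('b option \<times> 'b option) list" where
  "conv u v = map (\<lambda>i. (if i < length u then Some (u ! i) else None,
                         if i < length v then Some (v ! i) else None))
                  [0..<max (length u) (length v)]"

datatype unary_letter = a

definition unary_FA_presentable :: "'x set \<Rightarrow> ('x \<times> 'x) set \<Rightarrow> bool" where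
  "unary_FA_presentable X \<eta> \<longleftrightarrow>
     (\<exists>(L::unary_letter list set) (\<phi>::unary_letter list \<Rightarrow> 'x).
        regular L \<and> \<phi> ` L = X \<and>
        regular {conv u v | u v. u \<in> L \<and> v \<in> L \<and> \<phi> u = \<phi> v} \<and>
        regular {conv u v | u v. u \<in> L \<and> v \<in> L \<and> (\<phi> u, \<phi> v) \<in> \<eta>})"

definition directed_tree :: "'a set \<Rightarrow> ('a \<times> 'a) set \<Rightarrow> bool" where
  "directed_tree T \<eta> \<longleftrightarrow>
     finite T \<and> T \<noteq> {} \<and> \<eta> \<subseteq> T \<times> T \<and> irrefl \<eta> \<and> \<eta> \<inter> \<eta>\<inverse> = {} \<and>
     (\<forall>x\<in>T. \<forall>y\<in>T. (x, y) \<in> (\<eta> \<union> \<eta>\<inverse>)\<^sup>*) \<and>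
     card \<eta> + 1 = card T"

definition leaf :: "'a set \<Rightarrow> ('a \<times> 'a) set \<Rightarrow> 'a \<Rightarrow> bool" where
  "leaf T \<eta> v \<longleftrightarrow> v \<in> T \<and> card {u \<in> T. (u, v) \<in> \<eta> \<or> (v, u) \<in> \<eta>} = 1"

definition template :: "'a set \<Rightarrow> ('a \<times> 'a) set \<Rightarrow> 'a \<Rightarrow> 'a \<Rightarrow> bool" where
  "template T \<eta> t0 t1 \<longleftrightarrow> directed_tree T \<eta> \<and> t0 \<in> T \<and> t1 \<in> T \<and> leaf T \<eta> t0"

definition shallow_star :: "'a set \<Rightarrow> ('a \<times> 'a) set \<Rightarrow> 'a \<Rightarrow> 'a \<Rightarrow> bool" where
  "shallow_star T \<eta> t0 t1 \<longleftrightarrow> template T \<eta> t0 t1 \<and> t0 = t1"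

definition periodic_path :: "'a set \<Rightarrow> ('a \<times> 'a) set \<Rightarrow> 'a \<Rightarrow> 'a \<Rightarrow> bool" where
  "periodic_path T \<eta> t0 t1 \<longleftrightarrow> template T \<eta> t0 t1 \<and> t0 \<noteq> t1"

text \<open>Copies are indexed by j :: nat; vertex t of copy j is (j, t).  The
  identification is the equivalence relation generated by
  (t1 of copy j, t0 of copy j+1).\<close>
definition S_equiv :: "'a \<Rightarrow> 'a \<Rightarrow> ((nat \<times> 'a) \<times> (nat \<times> 'a)) set" where
  "S_equiv t0 t1 = (let R = {((j, t1), (Suc j, t0)) | j. True} in (R \<union> R\<inverse>)\<^sup>*)"

definition S_vertices :: "'a set \<Rightarrow> 'a \<Rightarrow> 'a \<Rightarrow> (nat \<times> 'a) set set" where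
  "S_vertices T t0 t1 = (UNIV \<times> T) // S_equiv t0 t1"

definition S_edges :: "('a \<times> 'a) set \<Rightarrow> 'a \<Rightarrow> 'a \<Rightarrow> ((nat \<times> 'a) set \<times> (nat \<times> 'a) set) set" where
  "S_edges \<eta> t0 t1 =
     {(S_equiv t0 t1 `` {(j, u)}, S_equiv t0 t1 `` {(j, v)}) | j u v. (u, v) \<in> \<eta>}"

end

theory Submission
  imports Defs
begin

text \<open>
  Enumerate \<open>T - {t0}\<close> as \<open>e 0, \<dots>, e (m - 1)\<close>; the empty word stands for \<open>t0\<close> in copy 0
  and the word of length \<open>j * m + i + 1\<close> for \<open>e i\<close> in copy \<open>j\<close>. Every vertex of the glued
  graph is identified with exactly one coded vertex, so equality of vertices is equality of word
  lengths. An edge only joins vertices of the same or of adjacent copies; hence an edge between two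
  nonempty codes \<open>k, l\<close> has \<open>|k - l| < 2 * m\<close>, and edges are invariant under the shift
  \<open>(k, l) \<mapsto> (k + m, l + m)\<close> (at the empty word, under \<open>l \<mapsto> l + m\<close>, since only the centre of a
  shallow star meets far copies). So whether \<open>(k, l)\<close> is an edge depends only on \<open>min k l\<close>,
  \<open>k - l\<close> and \<open>l - k\<close>, each reduced to a lasso with tail \<open>3 * m\<close> and loop \<open>m\<close>, and a finite
  automaton reading the convolution of the two words computes these three residues.
\<close>

lemma regular_finite_dfa:
  fixes Q :: "'q set" and \<delta> :: "'q \<Rightarrow> 's \<Rightarrow> 'q"
  assumes "finite Q" and "q0 \<in> Q" and closed: "\<forall>q\<in>Q. \<forall>x. \<delta> q x \<in> Q" and "F \<subseteq> Q"
  shows "regular {w. foldl \<delta> q0 w \<in> F}"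
proof -
  obtain h where h: "bij_betw h Q {0..<card Q}"
    using ex_bij_betw_finite_nat[OF \<open>finite Q\<close>] by blast
  define \<delta>' where "\<delta>' i x = h (\<delta> (inv_into Q h i) x)" for i x
  have run: "foldl \<delta>' (h q) w = h (foldl \<delta> q w) \<and> foldl \<delta> q w \<in> Q" if "q \<in> Q" for q w
    using that
  proof (induction w arbitrary: q)
    case (Cons x w)
    have "\<delta>' (h q) x = h (\<delta> q x)"
      using Cons.prems h by (simp add: \<delta>'_def bij_betw_def)
    then show ?case using Cons closed by simp
  qed simp
  have "foldl \<delta> q0 w \<in> F \<longleftrightarrow> foldl \<delta>' (h q0) w \<in> h ` F" for w
    using run[OF \<open>q0 \<in> Q\<close>] \<open>F \<subseteq> Q\<close> h by (metis bij_betw_def inj_on_image_mem_iff)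
  moreover have "\<forall>i\<in>{0..<card Q}. \<forall>x. \<delta>' i x \<in> {0..<card Q}"
    using h closed unfolding \<delta>'_def
    by (metis bij_betw_apply bij_betw_def inv_into_into)
  moreover have "h q0 \<in> {0..<card Q}" "h ` F \<subseteq> {0..<card Q}"
    using h \<open>q0 \<in> Q\<close> \<open>F \<subseteq> Q\<close> by (auto simp: bij_betw_def)
  ultimately show ?thesis
    unfolding regular_def by (intro exI[of _ "{0..<card Q}"] exI conjI) auto
qed

lemma regular_UNIV: "regular UNIV"
  using regular_finite_dfa[of "{()}" "()" "\<lambda>_ _. ()" "{()}"] by simp

lemma conv_Cons_Cons: "conv (x # u) (y # v) = (Some x, Some y) # conv u v"
  unfolding conv_def by (simp add: upt_conv_Cons map_Suc_upt[symmetric] del: upt_Suc)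

lemma conv_Nil_left: "conv [] v = map (\<lambda>y. (None, Some y)) v"
  unfolding conv_def by (rule nth_equalityI) auto

lemma conv_Nil_right: "conv u [] = map (\<lambda>x. (Some x, None)) u"
  unfolding conv_def by (rule nth_equalityI) auto

definition unary_conv :: "nat \<Rightarrow> nat \<Rightarrow> (unary_letter option \<times> unary_letter option) list" where
  "unary_conv k l =
     replicate (min k l) (Some a, Some a) @ replicate (k - l) (Some a, None) @ replicate (l - k) (None, Some a)"

lemma conv_replicate: "conv (replicate k a) (replicate l a) = unary_conv k l"
proof (induction k arbitrary: l)
  case 0
  then show ?case by (simp add: unary_conv_def conv_Nil_left map_replicate_const)
next
  case (Suc k)
  show ?case
  proof (cases l)
    case 0
    then show ?thesis
      by (simp add: unary_conv_def conv_Nil_right map_replicate_const del: replicate_Suc)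
  qed (simp add: Suc.IH unary_conv_def conv_Cons_Cons)
qed

lemma unary_list_eq_replicate: "(u :: unary_letter list) = replicate (length u) a"
  by (metis replicate_length_same unary_letter.exhaust)

lemma conv_unary_set:
  "{conv u v | u v. u \<in> UNIV \<and> v \<in> UNIV \<and> R (length u) (length v)} = {unary_conv k l | k l. R k l}"
proof -
  have "conv u v = unary_conv (length u) (length v)" for u v
    by (metis conv_replicate unary_list_eq_replicate)
  then show ?thesis by (auto, metis length_replicate)
qed

definition lasso :: "nat \<Rightarrow> nat \<Rightarrow> nat \<Rightarrow> nat" where
  "lasso N p x = (if x < N then x else N + x mod p)"

lemma lasso_less: "0 < p \<Longrightarrow> lasso N p x < N + p"
  unfolding lasso_def by auto

lemma lasso_eq_0_iff: "0 < N \<Longrightarrow> lasso N p x = 0 \<longleftrightarrow> x = 0"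
  unfolding lasso_def by auto

lemma lasso_eq_iff: "lasso N p x = lasso N p y \<longleftrightarrow> x = y \<or> (N \<le> x \<and> N \<le> y \<and> x mod p = y mod p)"
  unfolding lasso_def by auto

lemma lasso_Suc_lasso: "p dvd N \<Longrightarrow> lasso N p (Suc (lasso N p x)) = lasso N p (Suc x)"
proof -
  assume "p dvd N"
  then have "Suc (N + x mod p) mod p = Suc x mod p"
    by (metis add_Suc_right mod_Suc_eq mod_add_left_eq add_0 dvd_imp_mod_0)
  then show ?thesis unfolding lasso_def by auto
qed

definition lasso_key :: "nat \<Rightarrow> nat \<Rightarrow> nat \<Rightarrow> nat \<Rightarrow> nat \<times> nat \<times> nat" where
  "lasso_key N p k l = (lasso N p (min k l), lasso N p (k - l), lasso N p (l - k))"

lemma lasso_key_swap: "lasso_key N p l k = lasso_key N p l' k' \<longleftrightarrow> lasso_key N p k l = lasso_key N p k' l'"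
  unfolding lasso_key_def by (auto simp: min.commute)

lemma lasso_key_diag_eqD:
  assumes "0 < N" "lasso_key N p k k = lasso_key N p k' l'"
  shows "k' = l'"
proof -
  have "lasso N p (k' - l') = lasso N p 0" "lasso N p (l' - k') = lasso N p 0"
    using assms(2) by (simp_all add: lasso_key_def)
  then show ?thesis
    using lasso_eq_0_iff[OF assms(1)] by (metis diff_is_0_eq le_antisym)
qed

text \<open>The automaton reads the three blocks of \<open>unary_conv k l\<close> in order, counting the length of
  each block in the lasso; a letter out of order sends it to the sink \<open>None\<close>.\<close>

definition lasso_step ::
    "nat \<Rightarrow> nat \<Rightarrow> (nat \<times> nat \<times> nat) option \<Rightarrow> unary_letter option \<times> unary_letter option
      \<Rightarrow> (nat \<times> nat \<times> nat) option" where
  "lasso_step N p q s = (case q of None \<Rightarrow> None | Some (c, d, d') \<Rightarrow>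
     if s = (Some a, Some a) \<and> d = 0 \<and> d' = 0 then Some (lasso N p (Suc c), 0, 0)
     else if s = (Some a, None) \<and> d' = 0 then Some (c, lasso N p (Suc d), 0)
     else if s = (None, Some a) \<and> d = 0 then Some (c, 0, lasso N p (Suc d'))
     else None)"

lemma foldl_replicate_iterate:
  assumes "\<And>x. f (g x) s = g (Suc x)"
  shows "foldl f (g x) (replicate n s) = g (x + n)"
  using assms by (induction n arbitrary: x) simp_all

context
  fixes N p :: nat
  assumes "0 < p" and "p dvd N" and "0 < N"
begin

lemma foldl_lasso_step_unary_conv:
  "foldl (lasso_step N p) (Some (0, 0, 0)) (unary_conv k l) = Some (lasso_key N p k l)"
proof -
  have lasso_0: "lasso N p 0 = 0"
    using lasso_eq_0_iff \<open>0 < N\<close> by blast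
  have diag: "foldl (lasso_step N p) (Some (lasso N p x, 0, 0)) (replicate n (Some a, Some a))
      = Some (lasso N p (x + n), 0, 0)" for x n
    by (rule foldl_replicate_iterate[where g = "\<lambda>x. Some (lasso N p x, 0, 0)"])
      (simp add: lasso_step_def lasso_Suc_lasso \<open>p dvd N\<close>)
  have left: "foldl (lasso_step N p) (Some (c, lasso N p x, 0)) (replicate n (Some a, None))
      = Some (c, lasso N p (x + n), 0)" for c x n
    by (rule foldl_replicate_iterate[where g = "\<lambda>x. Some (c, lasso N p x, 0)"])
      (simp add: lasso_step_def lasso_Suc_lasso \<open>p dvd N\<close>)
  have right: "foldl (lasso_step N p) (Some (c, 0, lasso N p x)) (replicate n (None, Some a))
      = Some (c, 0, lasso N p (x + n))" for c x n
    by (rule foldl_replicate_iterate[where g = "\<lambda>x. Some (c, 0, lasso N p x)"])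
      (simp add: lasso_step_def lasso_Suc_lasso \<open>p dvd N\<close>)
  show ?thesis
    using diag[of 0] left[of _ 0] right[of _ 0]
    by (cases "l \<le> k") (simp_all add: unary_conv_def lasso_key_def lasso_0)
qed

lemma lasso_step_unary_conv_snoc:
  assumes "lasso_step N p (Some (lasso_key N p k l)) s = Some c"
  shows "\<exists>k' l'. unary_conv k l @ [s] = unary_conv k' l'"
proof -
  have "x = None \<or> x = Some a" for x :: "unary_letter option"
    by (metis unary_letter.exhaust option.exhaust)
  then have "s \<in> {(Some a, Some a), (Some a, None), (None, Some a), (None, None)}"
    by (cases s) auto
  moreover have "lasso N p (k - l) = 0 \<longleftrightarrow> k \<le> l" "lasso N p (l - k) = 0 \<longleftrightarrow> l \<le> k"
    using lasso_eq_0_iff \<open>0 < N\<close> by auto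
  ultimately consider "s = (Some a, Some a)" "k = l" | "s = (Some a, None)" "l \<le> k"
    | "s = (None, Some a)" "k \<le> l"
    using assms by (elim insertE emptyE) (auto simp: lasso_step_def lasso_key_def split: if_splits)
  then show ?thesis
  proof cases
    case 1
    then have "unary_conv k l @ [s] = unary_conv (Suc k) (Suc l)"
      by (simp add: unary_conv_def replicate_append_same)
    then show ?thesis by blast
  next
    case 2
    then have "unary_conv k l @ [s] = unary_conv (Suc k) l"
      by (simp add: unary_conv_def replicate_append_same Suc_diff_le min_def)
    then show ?thesis by blast
  next
    case 3
    then have "unary_conv k l @ [s] = unary_conv k (Suc l)"
      by (simp add: unary_conv_def replicate_append_same Suc_diff_le min_def)
    then show ?thesis by blast
  qed
qed

lemma unary_conv_if_foldl_lasso_step: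
  assumes "foldl (lasso_step N p) (Some (0, 0, 0)) w = Some c"
  shows "\<exists>k l. w = unary_conv k l"
  using assms
proof (induction w arbitrary: c rule: rev_induct)
  case Nil
  have "[] = unary_conv 0 0" by (simp add: unary_conv_def)
  then show ?case by blast
next
  case (snoc s w)
  have "lasso_step N p None s = None"
    by (simp add: lasso_step_def)
  then obtain c' where "foldl (lasso_step N p) (Some (0, 0, 0)) w = Some c'"
    using snoc.prems by (cases "foldl (lasso_step N p) (Some (0, 0, 0)) w") simp_all
  moreover obtain k l where w: "w = unary_conv k l"
    using snoc.IH calculation by blast
  ultimately have "lasso_step N p (Some (lasso_key N p k l)) s = Some c"
    using snoc.prems foldl_lasso_step_unary_conv by simp
  then show ?case
    using lasso_step_unary_conv_snoc w by blast
qed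

lemma regular_unary_conv_lasso_invariant:
  assumes "\<And>k l k' l'. lasso_key N p k l = lasso_key N p k' l' \<Longrightarrow> R k l \<Longrightarrow> R k' l'"
  shows "regular {unary_conv k l | k l. R k l}"
proof -
  let ?keys = "{..<N + p} \<times> {..<N + p} \<times> {..<N + p}"
  have "{unary_conv k l | k l. R k l}
      = {w. foldl (lasso_step N p) (Some (0, 0, 0)) w \<in> Some ` {lasso_key N p k l | k l. R k l}}"
  proof (intro set_eqI iffI)
    fix w
    assume "w \<in> {w. foldl (lasso_step N p) (Some (0, 0, 0)) w \<in> Some ` {lasso_key N p k l | k l. R k l}}"
    then obtain k l where "R k l" and run: "foldl (lasso_step N p) (Some (0, 0, 0)) w = Some (lasso_key N p k l)"
      by blast
    moreover obtain k' l' where "w = unary_conv k' l'"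
      using unary_conv_if_foldl_lasso_step run by blast
    moreover have "lasso_key N p k l = lasso_key N p k' l'"
      using run \<open>w = unary_conv k' l'\<close> foldl_lasso_step_unary_conv by simp
    ultimately show "w \<in> {unary_conv k l | k l. R k l}"
      using assms by blast
  next
    fix w
    assume "w \<in> {unary_conv k l | k l. R k l}"
    then obtain k l where "R k l" "w = unary_conv k l"
      by blast
    then show "w \<in> {w. foldl (lasso_step N p) (Some (0, 0, 0)) w \<in> Some ` {lasso_key N p k l | k l. R k l}}"
      by (simp add: foldl_lasso_step_unary_conv) blast
  qed
  moreover have "regular \<dots>"
    using lasso_less[OF \<open>0 < p\<close>] \<open>0 < p\<close>
    by (intro regular_finite_dfa[where Q = "insert None (Some ` ?keys)"])
      (auto simp: lasso_step_def lasso_key_def)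
  ultimately show ?thesis by simp
qed

end

lemma regular_unary_conv_eq: "regular {unary_conv k l | k l. k = l}"
proof (rule regular_unary_conv_lasso_invariant[of 1 1])
  show "k' = l'" if "lasso_key 1 1 k l = lasso_key 1 1 k' l'" "k = l" for k l k' l'
    using lasso_key_diag_eqD[of 1 1 k k' l'] that by simp
qed simp_all

lemma periodic_from_mod_eq:
  fixes f :: "nat \<Rightarrow> 'b"
  assumes periodic: "\<And>x. x0 \<le> x \<Longrightarrow> f (x + p) = f x"
    and "x0 \<le> x" "x0 \<le> y" "x mod p = y mod p"
  shows "f x = f y"
proof -
  have iterate: "f (x + t * p) = f x" if "x0 \<le> x" for x t
  proof (induction t)
    case (Suc t)
    have "f (x + Suc t * p) = f (x + t * p + p)"
      by (simp add: algebra_simps)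
    also have "\<dots> = f x"
      using Suc periodic[of "x + t * p"] that by simp
    finally show ?case .
  qed simp
  have ordered: "f x = f y" if "x0 \<le> x" "x \<le> y" "x mod p = y mod p" for x y
  proof -
    have "p dvd y - x"
      using that mod_eq_dvd_iff_nat[of x y p] by simp
    then obtain t where "y - x = p * t" ..
    then have "y = x + t * p"
      using \<open>x \<le> y\<close> by (simp add: mult.commute)
    then show ?thesis
      using iterate \<open>x0 \<le> x\<close> by simp
  qed
  show ?thesis
  proof (cases "x \<le> y")
    case True
    then show ?thesis
      using ordered[of x y] assms(2,4) by blast
  next
    case False
    then show ?thesis
      using ordered[of y x] assms(3,4) by simp
  qed
qed

lemma lasso_key_0_eqD:
  assumes "0 < N" "lasso_key N p 0 l = lasso_key N p k' l'"
  shows "k' = 0 \<and> lasso N p l = lasso N p l'"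
proof -
  have "lasso N p (min k' l') = 0" "lasso N p (k' - l') = 0"
    using assms lasso_eq_0_iff[of N p 0] by (simp_all add: lasso_key_def)
  then have "k' = 0"
    using lasso_eq_0_iff[OF \<open>0 < N\<close>] by auto
  then show ?thesis
    using assms by (simp add: lasso_key_def)
qed

lemma lasso_key_eq_on_row:
  assumes "0 < m" and periodic: "\<And>l. m < l \<Longrightarrow> f (l + m) = f l"
    and "lasso_key (3 * m) m 0 l = lasso_key (3 * m) m k' l'"
  shows "k' = 0 \<and> f l = f l'"
proof -
  have "k' = 0" and "lasso (3 * m) m l = lasso (3 * m) m l'"
    using lasso_key_0_eqD[of "3 * m" m l k' l'] assms by simp_all
  then have "k' = 0" and "l = l' \<or> 3 * m \<le> l \<and> 3 * m \<le> l' \<and> l mod m = l' mod m"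
    by (simp_all add: lasso_eq_iff)
  moreover have "f l = f l'" if "3 * m \<le> l" "3 * m \<le> l'" "l mod m = l' mod m"
  proof (rule periodic_from_mod_eq[of "Suc m" f m])
    show "f (x + m) = f x" if "Suc m \<le> x" for x
      using periodic that by simp
  qed (use that \<open>0 < m\<close> in auto)
  ultimately show ?thesis
    by blast
qed

lemma lasso_key_invariant_interior:
  fixes R :: "nat \<Rightarrow> nat \<Rightarrow> bool"
  assumes "0 < m"
    and shift: "\<And>k l. 0 < k \<Longrightarrow> 0 < l \<Longrightarrow> R (k + m) (l + m) = R k l"
    and near: "\<And>k l. 0 < k \<Longrightarrow> 0 < l \<Longrightarrow> R k l \<Longrightarrow> k < l + 2 * m \<and> l < k + 2 * m"
    and key: "lasso_key (3 * m) m k l = lasso_key (3 * m) m k' l'"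
    and "0 < k" "0 < l" "R k l"
  shows "R k' l'"
proof -
  have "k < l + 2 * m \<and> l < k + 2 * m"
    by (rule near[OF \<open>0 < k\<close> \<open>0 < l\<close> \<open>R k l\<close>])
  \<comment> \<open>below the tail length \<open>3 * m\<close> the key determines the differences exactly\<close>
  then have "k - l < 3 * m" "l - k < 3 * m"
    by auto
  then have "k' - l' = k - l" "l' - k' = l - k"
    using key by (auto simp: lasso_key_def lasso_eq_iff)
  define f where "f s = R (s + (k - l)) (s + (l - k))" for s
  have periodic: "f (s + m) = f s" if "1 \<le> s" for s
    using shift[of "s + (k - l)" "s + (l - k)"] that by (simp add: f_def algebra_simps)
  have "min k l = min k' l' \<or>
      3 * m \<le> min k l \<and> 3 * m \<le> min k' l' \<and> min k l mod m = min k' l' mod m"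
    using key by (simp add: lasso_key_def lasso_eq_iff)
  then have f_min: "f (min k l) = f (min k' l')"
  proof
    assume "3 * m \<le> min k l \<and> 3 * m \<le> min k' l' \<and> min k l mod m = min k' l' mod m"
    with \<open>0 < m\<close> show ?thesis
      by (intro periodic_from_mod_eq[of 1 f m, OF periodic]) auto
  qed simp
  have min_add_diff: "min x y + (x - y) = x" "min x y + (y - x) = y" for x y :: nat
    by auto
  have "f (min k l) = R k l"
    by (simp add: f_def min_add_diff)
  moreover have "f (min k' l') = R k' l'"
    unfolding f_def \<open>k' - l' = k - l\<close>[symmetric] \<open>l' - k' = l - k\<close>[symmetric]
    by (simp add: min_add_diff)
  ultimately show ?thesis
    using f_min \<open>R k l\<close> by simp
qed

lemma lasso_key_invariant:
  fixes R :: "nat \<Rightarrow> nat \<Rightarrow> bool"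
  assumes "0 < m"
    and shift: "\<And>k l. 0 < k \<Longrightarrow> 0 < l \<Longrightarrow> R (k + m) (l + m) = R k l"
    and near: "\<And>k l. 0 < k \<Longrightarrow> 0 < l \<Longrightarrow> R k l \<Longrightarrow> k < l + 2 * m \<and> l < k + 2 * m"
    and row: "\<And>l. m < l \<Longrightarrow> R 0 (l + m) = R 0 l"
    and column: "\<And>k. m < k \<Longrightarrow> R (k + m) 0 = R k 0"
    and key: "lasso_key (3 * m) m k l = lasso_key (3 * m) m k' l'" and "R k l"
  shows "R k' l'"
proof -
  consider "k = 0" | "l = 0" | "0 < k" "0 < l"
    by blast
  then show ?thesis
  proof cases
    case 1
    then have "lasso_key (3 * m) m 0 l = lasso_key (3 * m) m k' l'"
      using key by simp
    with \<open>0 < m\<close> row have "k' = 0 \<and> R 0 l = R 0 l'"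
      by (rule lasso_key_eq_on_row[of m "R 0"])
    then show ?thesis
      using \<open>R k l\<close> 1 by blast
  next
    case 2
    have "lasso_key (3 * m) m 0 k = lasso_key (3 * m) m l' k'"
      using key 2 by (simp only: lasso_key_swap)
    with \<open>0 < m\<close> column have "l' = 0 \<and> R k 0 = R k' 0"
      by (rule lasso_key_eq_on_row[of m "\<lambda>k. R k 0"])
    then show ?thesis
      using \<open>R k l\<close> 2 by blast
  next
    case 3
    then show ?thesis
      using lasso_key_invariant_interior[where R = R, OF \<open>0 < m\<close> shift near key] \<open>R k l\<close> by blast
  qed
qed

lemma chain_in_rtrancl_sym:
  assumes "\<And>j. (f j, f (Suc j)) \<in> R"
  shows "(f i, f i') \<in> (R \<union> R\<inverse>)\<^sup>*"
proof -
  have up: "(f i, f (i + d)) \<in> (R \<union> R\<inverse>)\<^sup>*" for i d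
  proof (induction d)
    case (Suc d)
    then show ?case
      using assms[of "i + d"] by (simp add: rtrancl.rtrancl_into_rtrancl)
  qed simp
  show ?thesis
  proof (cases "i \<le> i'")
    case True
    then show ?thesis
      using up[of i "i' - i"] by simp
  next
    case False
    have "sym ((R \<union> R\<inverse>)\<^sup>*)"
      by (rule sym_rtrancl) (auto simp: sym_def)
    then show ?thesis
      using up[of i' "i - i'"] False by (simp add: symD)
  qed
qed

text \<open>Explicit form of \<open>S_equiv\<close>; in a shallow star (\<open>t0 = t1\<close>) all copies of the centre
  are identified.\<close>

definition glue :: "'a \<Rightarrow> 'a \<Rightarrow> ((nat \<times> 'a) \<times> (nat \<times> 'a)) set" where
  "glue t0 t1 = {((i, t), (i', t')). (i, t) = (i', t')
     \<or> t = t1 \<and> t' = t0 \<and> i' = Suc i \<or> t = t0 \<and> t' = t1 \<and> i = Suc i'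
     \<or> t0 = t1 \<and> t = t0 \<and> t' = t0}"

lemma S_equiv_eq_glue: "S_equiv t0 t1 = glue t0 t1"
proof -
  define R where "R = {((j, t1), (Suc j, t0)) | j. True}"
  have S_equiv: "S_equiv t0 t1 = (R \<union> R\<inverse>)\<^sup>*"
    unfolding S_equiv_def R_def Let_def ..
  have "(x, y) \<in> glue t0 t1" if "(x, y) \<in> (R \<union> R\<inverse>)\<^sup>*" for x y
    using that
  proof (induction rule: rtrancl_induct)
    case base
    then show ?case by (cases x) (simp add: glue_def)
  next
    case (step y z)
    then show ?case
      by (cases x; cases y; cases z) (auto simp: glue_def R_def)
  qed
  moreover have "(x, y) \<in> (R \<union> R\<inverse>)\<^sup>*" if "(x, y) \<in> glue t0 t1" for x y
  proof -
    have centres: "((i, t0), (i', t0)) \<in> (R \<union> R\<inverse>)\<^sup>*" if "t0 = t1" for i i'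
      using chain_in_rtrancl_sym[of "\<lambda>j. (j, t0)" R i i'] that by (simp add: R_def)
    obtain i t i' t' where "x = (i, t)" "y = (i', t')"
      by force
    with that centres show ?thesis
      by (auto simp: glue_def R_def)
  qed
  ultimately show ?thesis
    unfolding S_equiv by auto
qed

lemma S_class_eq_iff: "S_equiv t0 t1 `` {x} = S_equiv t0 t1 `` {y} \<longleftrightarrow> (x, y) \<in> glue t0 t1"
proof -
  have "equiv UNIV (S_equiv t0 t1)"
    unfolding S_equiv_def Let_def
    by (intro equivI refl_rtrancl trans_rtrancl sym_rtrancl) (auto simp: sym_def)
  then show ?thesis
    by (simp add: eq_equiv_class_iff S_equiv_eq_glue)
qed

lemma S_edges_converse: "S_edges (\<eta>\<inverse>) t0 t1 = (S_edges \<eta> t0 t1)\<inverse>"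
  unfolding S_edges_def by auto

lemma S_edge_classes_iff:
  "(S_equiv t0 t1 `` {x}, S_equiv t0 t1 `` {y}) \<in> S_edges \<eta> t0 t1 \<longleftrightarrow>
     (\<exists>j u v. (u, v) \<in> \<eta> \<and> (x, (j, u)) \<in> glue t0 t1 \<and> (y, (j, v)) \<in> glue t0 t1)"
  unfolding S_edges_def by (auto simp: S_class_eq_iff)

lemma glue_Suc_Suc: "((Suc i, t), (Suc i', t')) \<in> glue t0 t1 \<longleftrightarrow> ((i, t), (i', t')) \<in> glue t0 t1"
  by (auto simp: glue_def)

lemma glue_copyD: "t \<noteq> t0 \<Longrightarrow> ((i, t), (j, u)) \<in> glue t0 t1 \<Longrightarrow> j = i \<or> j = Suc i"
  by (auto simp: glue_def)

lemma glue_0_centreD: "0 < j \<Longrightarrow> ((0, t0), (j, u)) \<in> glue t0 t1 \<Longrightarrow> t0 = t1 \<and> u = t0"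
  by (auto simp: glue_def)

lemma glue_centres: "t0 = t1 \<Longrightarrow> ((i, t0), (j, t0)) \<in> glue t0 t1"
  by (simp add: glue_def)

lemma glue_refl: "(x, x) \<in> glue t0 t1"
  by (cases x) (simp add: glue_def)

lemma glue_link: "((j, t1), (Suc j, t0)) \<in> glue t0 t1"
  by (simp add: glue_def)

lemma glue_sym: "(x, y) \<in> glue t0 t1 \<Longrightarrow> (y, x) \<in> glue t0 t1"
  by (auto simp: glue_def)

lemma glue_off_centre: "t \<noteq> t0 \<Longrightarrow> t' \<noteq> t0 \<Longrightarrow> ((i, t), (i', t')) \<in> glue t0 t1 \<longleftrightarrow> (i, t) = (i', t')"
  by (auto simp: glue_def)

lemma glue_centre_copyD: "t \<noteq> t0 \<Longrightarrow> ((i, t0), (i', t)) \<in> glue t0 t1 \<Longrightarrow> i = Suc i'"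
  by (auto simp: glue_def)

definition vertex_code :: "(nat \<Rightarrow> 'a) \<Rightarrow> nat \<Rightarrow> 'a \<Rightarrow> nat \<Rightarrow> nat \<times> 'a" where
  "vertex_code e m t0 k = (if k = 0 then (0, t0) else ((k - 1) div m, e ((k - 1) mod m)))"

definition coded_edge :: "('a \<times> 'a) set \<Rightarrow> (nat \<Rightarrow> 'a) \<Rightarrow> nat \<Rightarrow> 'a \<Rightarrow> 'a \<Rightarrow> nat \<Rightarrow> nat \<Rightarrow> bool" where
  "coded_edge \<eta> e m t0 t1 k l \<longleftrightarrow>
     (S_equiv t0 t1 `` {vertex_code e m t0 k}, S_equiv t0 t1 `` {vertex_code e m t0 l}) \<in> S_edges \<eta> t0 t1"

lemma vertex_code_0: "vertex_code e m t0 0 = (0, t0)"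
  by (simp add: vertex_code_def)

lemma coded_edge_converse: "coded_edge \<eta> e m t0 t1 k l \<longleftrightarrow> coded_edge (\<eta>\<inverse>) e m t0 t1 l k"
  by (simp add: coded_edge_def S_edges_converse)

lemma div_le_Suc_imp_less:
  fixes x y m :: nat
  assumes "0 < m" "x div m \<le> Suc (y div m)"
  shows "x < y + 2 * m"
proof -
  have "x < Suc (x div m) * m"
    using assms(1) dividend_less_div_times by auto
  also have "\<dots> \<le> (y div m + 2) * m"
    using assms(2) by (intro mult_right_mono) auto
  also have "\<dots> \<le> y + 2 * m"
    by (simp add: algebra_simps)
  finally show ?thesis .
qed

context
  fixes T :: "'a set" and e :: "nat \<Rightarrow> 'a" and m :: nat and t0 t1 :: 'a
  assumes "0 < m" and e_bij: "bij_betw e {..<m} (T - {t0})"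
begin

lemma vertex_code_snd: "0 < k \<Longrightarrow> snd (vertex_code e m t0 k) \<noteq> t0"
  using e_bij \<open>0 < m\<close> by (auto simp: vertex_code_def bij_betw_def)

lemma vertex_code_add:
  "0 < k \<Longrightarrow> vertex_code e m t0 (k + m) = (Suc (fst (vertex_code e m t0 k)), snd (vertex_code e m t0 k))"
  using \<open>0 < m\<close> by (cases k) (simp_all add: vertex_code_def div_add_self2)

lemma glue_vertex_code_add:
  assumes "0 < k"
  shows "(vertex_code e m t0 (k + m), (j, u)) \<in> glue t0 t1 \<longleftrightarrow>
    (\<exists>j'. j = Suc j' \<and> (vertex_code e m t0 k, (j', u)) \<in> glue t0 t1)"
proof -
  obtain i t where code: "vertex_code e m t0 k = (i, t)"
    by fastforce
  then have "t \<noteq> t0"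
    using vertex_code_snd[OF assms] by simp
  then have "\<exists>j'. j = Suc j'" if "((Suc i, t), (j, u)) \<in> glue t0 t1"
    using glue_copyD[OF _ that] by blast
  then show ?thesis
    using vertex_code_add[OF assms] code by (auto simp: glue_Suc_Suc)
qed

lemma glue_vertex_code_copy:
  "0 < k \<Longrightarrow> (vertex_code e m t0 k, (j, u)) \<in> glue t0 t1 \<Longrightarrow> (k - 1) div m \<le> j \<and> j \<le> Suc ((k - 1) div m)"
  using vertex_code_snd glue_copyD[of "snd (vertex_code e m t0 k)" t0 "fst (vertex_code e m t0 k)" j u t1]
  by (simp add: vertex_code_def) linarith

lemma coded_edge_glue_iff:
  "coded_edge \<eta> e m t0 t1 k l \<longleftrightarrow> (\<exists>j u v. (u, v) \<in> \<eta> \<and>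
     (vertex_code e m t0 k, (j, u)) \<in> glue t0 t1 \<and> (vertex_code e m t0 l, (j, v)) \<in> glue t0 t1)"
  unfolding coded_edge_def S_edge_classes_iff ..

lemma coded_edge_shift:
  "0 < k \<Longrightarrow> 0 < l \<Longrightarrow> coded_edge \<eta> e m t0 t1 (k + m) (l + m) \<longleftrightarrow> coded_edge \<eta> e m t0 t1 k l"
  unfolding coded_edge_glue_iff by (auto simp: glue_vertex_code_add)

lemma coded_edge_near:
  assumes "0 < k" "0 < l" "coded_edge \<eta> e m t0 t1 k l"
  shows "k < l + 2 * m \<and> l < k + 2 * m"
proof -
  obtain j u v where "(vertex_code e m t0 k, (j, u)) \<in> glue t0 t1" "(vertex_code e m t0 l, (j, v)) \<in> glue t0 t1"
    using assms(3) unfolding coded_edge_glue_iff by blast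
  then have "(k - 1) div m \<le> j \<and> j \<le> Suc ((k - 1) div m)" "(l - 1) div m \<le> j \<and> j \<le> Suc ((l - 1) div m)"
    using glue_vertex_code_copy assms(1,2) by blast+
  then have "k - 1 < l - 1 + 2 * m" "l - 1 < k - 1 + 2 * m"
    using div_le_Suc_imp_less[OF \<open>0 < m\<close>] by (meson le_trans)+
  then show ?thesis
    using assms(1,2) by linarith
qed

lemma coded_edge_0_iff:
  assumes "m < l"
  shows "coded_edge \<eta> e m t0 t1 0 l \<longleftrightarrow>
    t0 = t1 \<and> (\<exists>j v. (t0, v) \<in> \<eta> \<and> (vertex_code e m t0 l, (j, v)) \<in> glue t0 t1)"
proof
  assume "coded_edge \<eta> e m t0 t1 0 l"
  then obtain j u v where "(u, v) \<in> \<eta>" and centre: "((0, t0), (j, u)) \<in> glue t0 t1"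
      and copy: "(vertex_code e m t0 l, (j, v)) \<in> glue t0 t1"
    unfolding coded_edge_glue_iff vertex_code_0 by blast
  have "0 < l" "1 \<le> (l - 1) div m"
    using div_le_mono[of m "l - 1" m] assms \<open>0 < m\<close> by simp_all
  then have "0 < j"
    using glue_vertex_code_copy[OF _ copy] by linarith
  then have "t0 = t1 \<and> u = t0"
    using centre by (rule glue_0_centreD)
  with \<open>(u, v) \<in> \<eta>\<close> copy show "t0 = t1 \<and> (\<exists>j v. (t0, v) \<in> \<eta> \<and> (vertex_code e m t0 l, (j, v)) \<in> glue t0 t1)"
    by blast
next
  assume "t0 = t1 \<and> (\<exists>j v. (t0, v) \<in> \<eta> \<and> (vertex_code e m t0 l, (j, v)) \<in> glue t0 t1)"
  then obtain j v where "(t0, v) \<in> \<eta>" "t0 = t1" "(vertex_code e m t0 l, (j, v)) \<in> glue t0 t1"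
    by blast
  moreover have "((0, t0), (j, t0)) \<in> glue t0 t1"
    using \<open>t0 = t1\<close> by (rule glue_centres)
  ultimately show "coded_edge \<eta> e m t0 t1 0 l"
    unfolding coded_edge_glue_iff vertex_code_0 by blast
qed

lemma coded_edge_row:
  assumes "m < l"
  shows "coded_edge \<eta> e m t0 t1 0 (l + m) \<longleftrightarrow> coded_edge \<eta> e m t0 t1 0 l"
proof -
  have "0 < l"
    using assms by simp
  have "(\<exists>j v. (t0, v) \<in> \<eta> \<and> (vertex_code e m t0 (l + m), (j, v)) \<in> glue t0 t1) \<longleftrightarrow>
      (\<exists>j v. (t0, v) \<in> \<eta> \<and> (vertex_code e m t0 l, (j, v)) \<in> glue t0 t1)"
    unfolding glue_vertex_code_add[OF \<open>0 < l\<close>] by blast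
  then show ?thesis
    using assms by (simp add: coded_edge_0_iff)
qed

lemma coded_edge_column:
  "m < k \<Longrightarrow> coded_edge \<eta> e m t0 t1 (k + m) 0 \<longleftrightarrow> coded_edge \<eta> e m t0 t1 k 0"
  using coded_edge_row[of k "\<eta>\<inverse>"] by (simp add: coded_edge_converse[of \<eta>])

lemma coded_edge_lasso_key_invariant:
  "lasso_key (3 * m) m k l = lasso_key (3 * m) m k' l' \<Longrightarrow> coded_edge \<eta> e m t0 t1 k l \<Longrightarrow>
    coded_edge \<eta> e m t0 t1 k' l'"
  by (rule lasso_key_invariant[OF \<open>0 < m\<close>])
    (simp_all add: coded_edge_shift coded_edge_near coded_edge_row coded_edge_column)

lemma vertex_code_0_not_glued:
  assumes "0 < l"
  shows "(vertex_code e m t0 0, vertex_code e m t0 l) \<notin> glue t0 t1"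
proof
  obtain i t where code: "vertex_code e m t0 l = (i, t)"
    by fastforce
  assume "(vertex_code e m t0 0, vertex_code e m t0 l) \<in> glue t0 t1"
  then have "((0, t0), (i, t)) \<in> glue t0 t1"
    by (simp add: vertex_code_0 code)
  moreover have "t \<noteq> t0"
    using vertex_code_snd[OF assms] code by simp
  ultimately have "0 = Suc i"
    using glue_centre_copyD by metis
  then show False
    by simp
qed

lemma vertex_code_glue_imp_eq:
  assumes "(vertex_code e m t0 k, vertex_code e m t0 l) \<in> glue t0 t1"
  shows "k = l"
proof -
  have "k = 0 \<and> l = 0 \<or> 0 < k \<and> 0 < l"
    using assms glue_sym[OF assms] vertex_code_0_not_glued[of l] vertex_code_0_not_glued[of k]
    by (cases k; cases l) auto
  moreover have "k = l" if "0 < k" "0 < l"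
  proof -
    obtain i t i' t' where code: "vertex_code e m t0 k = (i, t)" "vertex_code e m t0 l = (i', t')"
      by fastforce
    moreover have "t \<noteq> t0" "t' \<noteq> t0"
      using vertex_code_snd that code by (metis snd_conv)+
    ultimately have "vertex_code e m t0 k = vertex_code e m t0 l"
      using assms glue_off_centre[of t t0 t' i i' t1] by simp
    then have "(k - 1) div m = (l - 1) div m" "e ((k - 1) mod m) = e ((l - 1) mod m)"
      using that by (simp_all add: vertex_code_def)
    moreover have "inj_on e {..<m}"
      using e_bij by (simp add: bij_betw_def)
    ultimately have "(k - 1) div m = (l - 1) div m" "(k - 1) mod m = (l - 1) mod m"
      using \<open>0 < m\<close> by (auto dest: inj_onD)
    then have "k - 1 = l - 1"
      by (metis div_mult_mod_eq)
    then show ?thesis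
      using that by simp
  qed
  ultimately show ?thesis
    by auto
qed

lemma vertex_code_copy:
  assumes "t \<in> T" "t \<noteq> t0"
  shows "\<exists>k. vertex_code e m t0 k = (i, t)"
proof -
  have "t \<in> e ` {..<m}"
    using e_bij assms by (simp add: bij_betw_def)
  then obtain r where "r < m" "t = e r"
    by auto
  then have "vertex_code e m t0 (Suc (i * m + r)) = (i, t)"
    by (simp add: vertex_code_def)
  then show ?thesis ..
qed

lemma vertex_code_onto:
  assumes "t \<in> T" "t1 \<in> T"
  shows "\<exists>k. (vertex_code e m t0 k, (j, t)) \<in> glue t0 t1"
proof -
  consider "t \<noteq> t0" | "t = t0" "j = 0 \<or> t0 = t1" | j' where "t = t0" "j = Suc j'" "t0 \<noteq> t1"
    by (cases j) auto
  then show ?thesis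
  proof cases
    case 1
    then obtain k where "vertex_code e m t0 k = (j, t)"
      using vertex_code_copy[OF \<open>t \<in> T\<close>] by blast
    then have "(vertex_code e m t0 k, (j, t)) \<in> glue t0 t1"
      by (simp add: glue_refl)
    then show ?thesis ..
  next
    case 2
    have "((0, t0), (j, t0)) \<in> glue t0 t1"
    proof (cases "j = 0")
      case True
      show ?thesis
        unfolding True by (rule glue_refl)
    next
      case False
      with 2(2) have "t0 = t1"
        by blast
      then show ?thesis
        by (rule glue_centres)
    qed
    then have "(vertex_code e m t0 0, (j, t)) \<in> glue t0 t1"
      unfolding vertex_code_0 \<open>t = t0\<close> .
    then show ?thesis
      by (rule exI[where x = 0])
  next
    case 3
    then have "t1 \<noteq> t0"
      by simp
    then obtain k where code: "vertex_code e m t0 k = (j', t1)"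
      using vertex_code_copy[OF \<open>t1 \<in> T\<close>] by blast
    have "(vertex_code e m t0 k, (j, t)) \<in> glue t0 t1"
      unfolding code \<open>j = Suc j'\<close> \<open>t = t0\<close> by (rule glue_link)
    then show ?thesis ..
  qed
qed

lemma vertex_code_classes:
  assumes "t0 \<in> T" "t1 \<in> T"
  shows "range (\<lambda>k. S_equiv t0 t1 `` {vertex_code e m t0 k}) = S_vertices T t0 t1"
proof
  have "e i \<in> T" if "i < m" for i
    using e_bij that by (auto simp: bij_betw_def)
  then have "vertex_code e m t0 k \<in> UNIV \<times> T" for k
    using \<open>t0 \<in> T\<close> \<open>0 < m\<close> by (simp add: vertex_code_def)
  then show "range (\<lambda>k. S_equiv t0 t1 `` {vertex_code e m t0 k}) \<subseteq> S_vertices T t0 t1"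
    unfolding S_vertices_def by (auto intro: quotientI)
next
  show "S_vertices T t0 t1 \<subseteq> range (\<lambda>k. S_equiv t0 t1 `` {vertex_code e m t0 k})"
  proof
    fix X
    assume "X \<in> S_vertices T t0 t1"
    then obtain j t where "t \<in> T" "X = S_equiv t0 t1 `` {(j, t)}"
      unfolding S_vertices_def by (auto elim: quotientE)
    moreover obtain k where "(vertex_code e m t0 k, (j, t)) \<in> glue t0 t1"
      using vertex_code_onto[OF \<open>t \<in> T\<close> \<open>t1 \<in> T\<close>] by blast
    ultimately have "X = S_equiv t0 t1 `` {vertex_code e m t0 k}"
      by (simp add: S_class_eq_iff glue_sym)
    then show "X \<in> range (\<lambda>k. S_equiv t0 t1 `` {vertex_code e m t0 k})"
      by blast
  qed
qed

lemma vertex_code_class_eq_iff: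
  "S_equiv t0 t1 `` {vertex_code e m t0 k} = S_equiv t0 t1 `` {vertex_code e m t0 l} \<longleftrightarrow> k = l"
proof
  assume "S_equiv t0 t1 `` {vertex_code e m t0 k} = S_equiv t0 t1 `` {vertex_code e m t0 l}"
  then show "k = l"
    unfolding S_class_eq_iff by (rule vertex_code_glue_imp_eq)
qed simp

lemma regular_coded_edge: "regular {unary_conv k l | k l. coded_edge \<eta> e m t0 t1 k l}"
proof (rule regular_unary_conv_lasso_invariant[of m "3 * m"])
  show "coded_edge \<eta> e m t0 t1 k' l'"
    if "lasso_key (3 * m) m k l = lasso_key (3 * m) m k' l'" "coded_edge \<eta> e m t0 t1 k l" for k l k' l'
    using coded_edge_lasso_key_invariant[OF that] .
qed (use \<open>0 < m\<close> in simp_all)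

lemma unary_FA_presentable_S_graph:
  assumes "t0 \<in> T" "t1 \<in> T"
  shows "unary_FA_presentable (S_vertices T t0 t1) (S_edges \<eta> t0 t1)"
proof -
  define \<phi> where "\<phi> u = S_equiv t0 t1 `` {vertex_code e m t0 (length u)}" for u :: "unary_letter list"
  have "range (length :: unary_letter list \<Rightarrow> nat) = UNIV"
    by (rule surjI[of length "\<lambda>k. replicate k a"]) simp
  moreover have "range \<phi> = (\<lambda>k. S_equiv t0 t1 `` {vertex_code e m t0 k}) ` range (length :: unary_letter list \<Rightarrow> nat)"
    unfolding \<phi>_def by (simp add: image_image)
  ultimately have vertices: "range \<phi> = S_vertices T t0 t1"
    using vertex_code_classes[OF assms] by simp
  have equality: "{conv u v | u v. u \<in> UNIV \<and> v \<in> UNIV \<and> \<phi> u = \<phi> v} = {unary_conv k l | k l. k = l}"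
    using conv_unary_set[of "\<lambda>k l. k = l"] by (simp add: \<phi>_def vertex_code_class_eq_iff)
  have edges: "{conv u v | u v. u \<in> UNIV \<and> v \<in> UNIV \<and> (\<phi> u, \<phi> v) \<in> S_edges \<eta> t0 t1}
      = {unary_conv k l | k l. coded_edge \<eta> e m t0 t1 k l}"
    unfolding \<phi>_def coded_edge_def by (rule conv_unary_set)
  show ?thesis
    unfolding unary_FA_presentable_def
    by (intro exI[of _ UNIV] exI[of _ \<phi>] conjI)
      (simp_all only: vertices equality edges regular_UNIV regular_unary_conv_eq regular_coded_edge)
qed

end

lemma leaf_other_vertex:
  assumes "leaf T \<eta> v" "irrefl \<eta>"
  shows "T - {v} \<noteq> {}"
proof -
  obtain u where "{u \<in> T. (u, v) \<in> \<eta> \<or> (v, u) \<in> \<eta>} = {u}"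
    using assms(1) unfolding leaf_def by (meson card_1_singletonE)
  then have "u \<in> T" "(u, v) \<in> \<eta> \<or> (v, u) \<in> \<eta>"
    by blast+
  moreover have "u \<noteq> v"
    using calculation(2) assms(2) unfolding irrefl_def by blast
  ultimately show ?thesis
    by blast
qed

theorem lemma6p5:
  fixes T :: "'a set" and \<eta> :: "('a \<times> 'a) set" and t0 t1 :: 'a
  assumes "shallow_star T \<eta> t0 t1 \<or> periodic_path T \<eta> t0 t1"
  shows "unary_FA_presentable (S_vertices T t0 t1) (S_edges \<eta> t0 t1)"
proof -
  have "template T \<eta> t0 t1"
    using assms unfolding shallow_star_def periodic_path_def by blast
  then have "finite T" "irrefl \<eta>" "t0 \<in> T" "t1 \<in> T" "leaf T \<eta> t0"
    unfolding template_def directed_tree_def by blast+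
  define m where "m = card (T - {t0})"
  have "0 < m"
    using leaf_other_vertex[OF \<open>leaf T \<eta> t0\<close> \<open>irrefl \<eta>\<close>] \<open>finite T\<close>
    by (simp add: m_def card_gt_0_iff)
  obtain e where "bij_betw e {..<m} (T - {t0})"
    using ex_bij_betw_nat_finite[of "T - {t0}"] \<open>finite T\<close>
    unfolding m_def atLeast0LessThan by blast
  from unary_FA_presentable_S_graph[OF \<open>0 < m\<close> this \<open>t0 \<in> T\<close> \<open>t1 \<in> T\<close>] show ?thesis .
qed

end
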